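(* Let $n,k,m$ be positive integers with $\frac32k<m<2k$, $2m-3k$ odd, and $\operatorname{lcm}(4m-6k,\,4k-2m)\mid n$. Then $$N_P(n,k,m)\le \frac{3k-m+1}{2}\,n.$$
   Context: Fix a finite field $\mathbb{F}_q$; $[n]=\{1,\dots,n\}$. An $(n,N,k,m)$-PIR array code over $\mathbb{F}_q$ is an $\mathbb{F}_q$-linear map $\mathbf x\in\mathbb{F}_q^n\mapsto(\mathbf c_1,\dots,\mathbf c_m)$ with buckets $\mathbf c_\ell\in\mathbb{F}_q^{N_\ell}$, $N_\ell\ge1$ independent of $\mathbf x$, $\sum_\ell N_\ell=N$, such that for each $i\in[n]$ there is a partition of $[m]$ into $k$ sets $R_1,\dots,R_k$ such that for each $j$, $x_i$ is an $\mathbb{F}_q$-linear combination of values $f_\ell(\mathbf c_\ell)$, $\ell\in R_j$, for some linear functionals $f_\ell:\mathbb{F}_q^{N_\ell}\to\mathbb{F}_q$ (independent of $\mathbf x$). $N_P(n,k,m)$ is the minimum $N$ for which such a code exists. *)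

theory Defs
  imports Complex_Main
begin

text \<open>Vectors in F_q^n are functions nat => 'a, coordinates indexed by {1..n}.
  Buckets are indexed by {1..m}; bucket l has size Nl l, coordinates {1..Nl l}.\<close>

definition bucket :: "nat \<Rightarrow> (nat \<Rightarrow> nat \<Rightarrow> nat \<Rightarrow> 'a::field) \<Rightarrow> nat \<Rightarrow> (nat \<Rightarrow> 'a) \<Rightarrow> nat \<Rightarrow> 'a" where
  "bucket n G l x r = (\<Sum>i\<in>{1..n}. G l r i * x i)"

definition is_partition_k :: "nat \<Rightarrow> nat \<Rightarrow> (nat \<Rightarrow> nat set) \<Rightarrow> bool" where
  "is_partition_k m k R \<longleftrightarrow>
     (\<Union>j\<in>{1..k}. R j) = {1..m} \<and>
     (\<forall>j\<in>{1..k}. R j \<noteq> {}) \<and>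
     (\<forall>j\<in>{1..k}. \<forall>j'\<in>{1..k}. j \<noteq> j' \<longrightarrow> R j \<inter> R j' = {})"

definition pir_array_code ::
  "nat \<Rightarrow> nat \<Rightarrow> nat \<Rightarrow> nat \<Rightarrow> (nat \<Rightarrow> nat) \<Rightarrow> (nat \<Rightarrow> nat \<Rightarrow> nat \<Rightarrow> 'a::field) \<Rightarrow> bool" where
  "pir_array_code n N k m Nl G \<longleftrightarrow>
     (\<forall>l\<in>{1..m}. Nl l \<ge> 1) \<and> (\<Sum>l\<in>{1..m}. Nl l) = N \<and>
     (\<forall>i\<in>{1..n}. \<exists>R. is_partition_k m k R \<and>
        (\<forall>j\<in>{1..k}. \<exists>(lam :: nat \<Rightarrow> 'a) (f :: nat \<Rightarrow> nat \<Rightarrow> 'a).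
           \<forall>x :: nat \<Rightarrow> 'a.
             x i = (\<Sum>l\<in>R j. lam l * (\<Sum>r\<in>{1..Nl l}. f l r * bucket n G l x r))))"

definition N_P :: "'a::{field,finite} itself \<Rightarrow> nat \<Rightarrow> nat \<Rightarrow> nat \<Rightarrow> nat" where
  "N_P (_::'a itself) n k m =
     Inf {N. \<exists>Nl (G :: nat \<Rightarrow> nat \<Rightarrow> nat \<Rightarrow> 'a). pir_array_code n N k m Nl G}"

end

theory Submission
  imports Defs
begin

text \<open>Write \<open>a = 2m - 3k\<close> (odd) and \<open>b = 2k - m\<close>, so that \<open>k = a + 2b\<close>, \<open>m = 2a + 3b\<close> and \<open>2a\<close>
  divides \<open>n\<close>. Cut the data into blocks of \<open>2a\<close> symbols and encode every block by the direct sum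
  of two codes. The first has \<open>2a\<close> buckets indexed by \<open>\<int>/2a\<close>: bucket \<open>u\<close> stores \<open>x\<^sub>u\<close> and the
  \<open>(a - 1)/2\<close> sums \<open>x\<^bsub>u-1-2e\<^esub> + x\<^bsub>u-1+2e\<^esub>\<close>. Symbol \<open>x\<^sub>j\<close> is read off bucket \<open>j\<close>, and for
  \<open>0 < e < a\<close> from buckets \<open>j + 2e + 1\<close> and \<open>j + 4e\<close>, which hold \<open>x\<^sub>j + x\<^bsub>j+4e\<^esub>\<close> and \<open>x\<^bsub>j+4e\<^esub>\<close>;
  as \<open>2\<close> is invertible modulo the odd number \<open>a\<close>, these \<open>a\<close> groups partition the buckets. The
  second is \<open>b\<close> copies of the three-bucket code \<open>(x', x'', x' + x'')\<close>, each giving two more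
  disjoint recovery sets. The storage per data symbol is \<open>(a + 1)/2 + 3b/2 = (3k - m + 1)/2\<close>.\<close>

section \<open>Linear recovery from a set of buckets\<close>

definition lin_recoverable ::
  "nat \<Rightarrow> (nat \<Rightarrow> nat) \<Rightarrow> (nat \<Rightarrow> nat \<Rightarrow> nat \<Rightarrow> 'a::field) \<Rightarrow> nat set \<Rightarrow> ((nat \<Rightarrow> 'a) \<Rightarrow> 'a) \<Rightarrow> bool"
  where
  "lin_recoverable n Nl G S y \<longleftrightarrow>
     (\<exists>(lam :: nat \<Rightarrow> 'a) (f :: nat \<Rightarrow> nat \<Rightarrow> 'a).
        \<forall>x. y x = (\<Sum>l\<in>S. lam l * (\<Sum>r\<in>{1..Nl l}. f l r * bucket n G l x r)))"

lemma pir_array_code_iff: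
  "pir_array_code n N k m Nl G \<longleftrightarrow>
     (\<forall>l\<in>{1..m}. Nl l \<ge> 1) \<and> (\<Sum>l\<in>{1..m}. Nl l) = N \<and>
     (\<forall>i\<in>{1..n}. \<exists>R. is_partition_k m k R \<and>
        (\<forall>j\<in>{1..k}. lin_recoverable n Nl G (R j) (\<lambda>x. x i)))"
  unfolding pir_array_code_def lin_recoverable_def ..

lemma lin_recoverable_iff_coefficients:
  "lin_recoverable n Nl G S y \<longleftrightarrow>
     (\<exists>c. \<forall>x. y x = (\<Sum>l\<in>S. \<Sum>r\<in>{1..Nl l}. c l r * bucket n G l x r))"
proof
  assume "lin_recoverable n Nl G S y"
  then obtain lam f where "\<forall>x. y x = (\<Sum>l\<in>S. lam l * (\<Sum>r\<in>{1..Nl l}. f l r * bucket n G l x r))"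
    unfolding lin_recoverable_def by blast
  then have "\<forall>x. y x = (\<Sum>l\<in>S. \<Sum>r\<in>{1..Nl l}. (lam l * f l r) * bucket n G l x r)"
    by (simp add: sum_distrib_left mult.assoc)
  then show "\<exists>c. \<forall>x. y x = (\<Sum>l\<in>S. \<Sum>r\<in>{1..Nl l}. c l r * bucket n G l x r)"
    by (rule exI[of _ "\<lambda>l r. lam l * f l r"])
next
  assume "\<exists>c. \<forall>x. y x = (\<Sum>l\<in>S. \<Sum>r\<in>{1..Nl l}. c l r * bucket n G l x r)"
  then obtain c where "\<forall>x. y x = (\<Sum>l\<in>S. \<Sum>r\<in>{1..Nl l}. c l r * bucket n G l x r)" ..
  then show "lin_recoverable n Nl G S y"
    unfolding lin_recoverable_def by (intro exI[of _ "\<lambda>_. 1"] exI[of _ c]) simp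
qed

lemma lin_recoverable_diff:
  assumes "lin_recoverable n Nl G S y" "lin_recoverable n Nl G S z"
  shows "lin_recoverable n Nl G S (\<lambda>x. y x - z x)"
proof -
  obtain c d where
    "\<forall>x. y x = (\<Sum>l\<in>S. \<Sum>r\<in>{1..Nl l}. c l r * bucket n G l x r)"
    "\<forall>x. z x = (\<Sum>l\<in>S. \<Sum>r\<in>{1..Nl l}. d l r * bucket n G l x r)"
    using assms unfolding lin_recoverable_iff_coefficients by blast
  then have "\<forall>x. y x - z x = (\<Sum>l\<in>S. \<Sum>r\<in>{1..Nl l}. (c l r - d l r) * bucket n G l x r)"
    by (simp add: left_diff_distrib sum_subtractf)
  then show ?thesis
    unfolding lin_recoverable_iff_coefficients by (rule exI[of _ "\<lambda>l r. c l r - d l r"])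
qed

lemma lin_recoverable_coordinate:
  assumes "finite S" "l \<in> S" "r \<in> {1..Nl l}" "\<And>x. bucket n G l x r = y x"
  shows "lin_recoverable n Nl G S y"
  unfolding lin_recoverable_iff_coefficients
proof (intro exI allI)
  fix x
  have "(\<Sum>r'\<in>{1..Nl l'}. (if l' = l \<and> r' = r then 1 else 0) * bucket n G l' x r')
      = (if l' = l then bucket n G l x r else 0)" for l'
    using assms(3) by (auto simp: if_distrib[of "\<lambda>c. c * _"] cong: if_cong)
  then show "y x =
    (\<Sum>l'\<in>S. \<Sum>r'\<in>{1..Nl l'}. (if l' = l \<and> r' = r then 1 else 0) * bucket n G l' x r')"
    using assms(1,2,4) by simp
qed

lemma lin_recoverable_coordinate_diff:
  assumes "finite S" "l1 \<in> S" "r1 \<in> {1..Nl l1}" "l2 \<in> S" "r2 \<in> {1..Nl l2}"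
    and "\<And>x. bucket n G l1 x r1 = y x + z x" "\<And>x. bucket n G l2 x r2 = z x"
  shows "lin_recoverable n Nl G S y"
proof -
  have "lin_recoverable n Nl G S (\<lambda>x. bucket n G l1 x r1 - bucket n G l2 x r2)"
    using assms(1-5) by (intro lin_recoverable_diff lin_recoverable_coordinate) auto
  then show ?thesis
    by (simp add: assms(6,7))
qed

lemma lin_recoverable_nonempty:
  assumes "lin_recoverable n Nl G S (\<lambda>x. x i)"
  shows "S \<noteq> {}"
proof
  assume "S = {}"
  with assms have "\<forall>x :: nat \<Rightarrow> 'a. x i = 0"
    unfolding lin_recoverable_def by simp
  from this[rule_format, of "\<lambda>_. 1"] show False
    by simp
qed

lemma lin_recoverable_cong:
  assumes "\<And>l. l \<in> S \<Longrightarrow> Nl' l = Nl l" "\<And>l. l \<in> S \<Longrightarrow> G' l = G l"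
  shows "lin_recoverable n Nl' G' S y \<longleftrightarrow> lin_recoverable n Nl G S y"
  unfolding lin_recoverable_def bucket_def using assms by (simp cong: sum.cong)

lemma lin_recoverable_shift:
  "lin_recoverable n Nl G ((\<lambda>l. l + d) ` S) y \<longleftrightarrow>
   lin_recoverable n (\<lambda>l. Nl (l + d)) (\<lambda>l. G (l + d)) S y"
proof -
  have sum_shift: "(\<Sum>l\<in>(\<lambda>l. l + d) ` S. F l) = (\<Sum>l\<in>S. F (l + d))" for F :: "nat \<Rightarrow> 'a"
    by (simp add: sum.reindex)
  have bucket_shift: "bucket n (\<lambda>l. G (l + d)) l = bucket n G (l + d)" for l
    by (simp add: bucket_def fun_eq_iff)
  show ?thesis
    unfolding lin_recoverable_iff_coefficients sum_shift bucket_shift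
  proof
    assume "\<exists>c. \<forall>x. y x = (\<Sum>l\<in>S. \<Sum>r\<in>{1..Nl (l + d)}. c (l + d) r * bucket n G (l + d) x r)"
    then obtain c where "\<forall>x. y x = (\<Sum>l\<in>S. \<Sum>r\<in>{1..Nl (l + d)}. c (l + d) r * bucket n G (l + d) x r)" ..
    then show "\<exists>c. \<forall>x. y x = (\<Sum>l\<in>S. \<Sum>r\<in>{1..Nl (l + d)}. c l r * bucket n G (l + d) x r)"
      by (rule exI[of _ "\<lambda>l r. c (l + d) r"])
  next
    assume "\<exists>c. \<forall>x. y x = (\<Sum>l\<in>S. \<Sum>r\<in>{1..Nl (l + d)}. c l r * bucket n G (l + d) x r)"
    then obtain c where "\<forall>x. y x = (\<Sum>l\<in>S. \<Sum>r\<in>{1..Nl (l + d)}. c l r * bucket n G (l + d) x r)" ..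
    then show "\<exists>c. \<forall>x. y x = (\<Sum>l\<in>S. \<Sum>r\<in>{1..Nl (l + d)}. c (l + d) r * bucket n G (l + d) x r)"
      by (intro exI[of _ "\<lambda>l r. c (l - d) r"]) simp
  qed
qed

section \<open>Direct sums of codes\<close>

lemma is_partition_k_subset:
  assumes "is_partition_k m k R" "j \<in> {1..k}"
  shows "R j \<subseteq> {1..m}"
  using assms unfolding is_partition_k_def by blast

lemma is_partition_k_append:
  assumes R1: "is_partition_k m1 k1 R1" and R2: "is_partition_k m2 k2 R2"
  shows "is_partition_k (m1 + m2) (k1 + k2)
           (\<lambda>j. if j \<le> k1 then R1 j else (\<lambda>l. l + m1) ` R2 (j - k1))"
    (is "is_partition_k _ _ ?R")
proof -
  have split: "{1..k1 + k2} = {1..k1} \<union> (\<lambda>j. j + k1) ` {1..k2}"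
    by (auto simp: image_iff intro: exI[of _ "_ - k1"])
  have "(\<Union>j\<in>{1..k1 + k2}. ?R j) = (\<Union>j\<in>{1..k1}. R1 j) \<union> (\<lambda>l. l + m1) ` (\<Union>j\<in>{1..k2}. R2 j)"
  proof -
    have "(\<Union>j\<in>{1..k2}. ?R (j + k1)) = (\<lambda>l. l + m1) ` (\<Union>j\<in>{1..k2}. R2 j)"
      by auto
    moreover have "(\<Union>j\<in>{1..k1}. ?R j) = (\<Union>j\<in>{1..k1}. R1 j)"
      by auto
    ultimately show ?thesis
      unfolding split UN_Un image_image by simp
  qed
  also have "\<dots> = {1..m1 + m2}"
    using R1 R2 unfolding is_partition_k_def
    by (auto simp: image_iff intro: exI[of _ "_ - m1"])
  finally have union: "(\<Union>j\<in>{1..k1 + k2}. ?R j) = {1..m1 + m2}" .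
  have nonempty: "?R j \<noteq> {}" if "j \<in> {1..k1 + k2}" for j
  proof (cases "j \<le> k1")
    case True
    with that R1 show ?thesis unfolding is_partition_k_def by auto
  next
    case False
    with that have "j - k1 \<in> {1..k2}" by auto
    with False R2 show ?thesis unfolding is_partition_k_def by auto
  qed
  have disjoint: "?R j \<inter> ?R j' = {}" if "j \<in> {1..k1 + k2}" "j' \<in> {1..k1 + k2}" "j \<noteq> j'" for j j'
  proof -
    have low: "R1 j \<inter> (\<lambda>l. l + m1) ` R2 j'' = {}" if "j \<in> {1..k1}" "j'' \<in> {1..k2}" for j j''
      using is_partition_k_subset[OF R1 that(1)] is_partition_k_subset[OF R2 that(2)] by fastforce
    have high: "j - k1 \<in> {1..k2}" if "j \<in> {1..k1 + k2}" "\<not> j \<le> k1" for j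
      using that by auto
    show ?thesis
    proof (cases "j \<le> k1"; cases "j' \<le> k1")
      assume "\<not> j \<le> k1" "\<not> j' \<le> k1"
      then have "R2 (j - k1) \<inter> R2 (j' - k1) = {}"
        using R2 high that unfolding is_partition_k_def by auto
      with \<open>\<not> j \<le> k1\<close> \<open>\<not> j' \<le> k1\<close> show ?thesis
        by (simp add: image_Int[symmetric])
    qed (use that R1 low high in \<open>auto simp: is_partition_k_def\<close>)
  qed
  show ?thesis
    unfolding is_partition_k_def using union nonempty disjoint by blast
qed

definition bucket_append :: "nat \<Rightarrow> (nat \<Rightarrow> 'b) \<Rightarrow> (nat \<Rightarrow> 'b) \<Rightarrow> nat \<Rightarrow> 'b" where
  "bucket_append m1 F1 F2 l = (if l \<le> m1 then F1 l else F2 (l - m1))"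

lemma pir_array_code_append:
  assumes C1: "pir_array_code n N1 k1 m1 Nl1 G1" and C2: "pir_array_code n N2 k2 m2 Nl2 G2"
  shows "pir_array_code n (N1 + N2) (k1 + k2) (m1 + m2)
           (bucket_append m1 Nl1 Nl2) (bucket_append m1 G1 G2)"
  unfolding pir_array_code_iff
proof (intro conjI ballI)
  let ?Nl = "bucket_append m1 Nl1 Nl2" and ?G = "bucket_append m1 G1 G2"
  show "?Nl l \<ge> 1" if "l \<in> {1..m1 + m2}" for l
  proof -
    have "l \<in> {1..m1} \<or> l - m1 \<in> {1..m2} \<and> \<not> l \<le> m1"
      using that by auto
    then show ?thesis
      using C1 C2 unfolding pir_array_code_iff bucket_append_def by auto
  qed
  have "(\<Sum>l\<in>{1..m1 + m2}. ?Nl l) = (\<Sum>l\<in>{1..m1}. ?Nl l) + (\<Sum>l\<in>{m1 + 1..m1 + m2}. ?Nl l)"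
    by (rule sum.ub_add_nat) simp
  also have "(\<Sum>l\<in>{m1 + 1..m1 + m2}. ?Nl l) = (\<Sum>l\<in>{1..m2}. ?Nl (l + m1))"
    using sum.shift_bounds_cl_nat_ivl[of ?Nl 1 m1 m2] by (simp only: add.commute)
  also have "(\<Sum>l\<in>{1..m1}. ?Nl l) + (\<Sum>l\<in>{1..m2}. ?Nl (l + m1))
      = (\<Sum>l\<in>{1..m1}. Nl1 l) + (\<Sum>l\<in>{1..m2}. Nl2 l)"
    by (simp add: bucket_append_def)
  finally show "(\<Sum>l\<in>{1..m1 + m2}. ?Nl l) = N1 + N2"
    using C1 C2 unfolding pir_array_code_iff by simp
  fix i assume i: "i \<in> {1..n}"
  obtain R1 R2 where
    R1: "is_partition_k m1 k1 R1" "\<forall>j\<in>{1..k1}. lin_recoverable n Nl1 G1 (R1 j) (\<lambda>x. x i)" and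
    R2: "is_partition_k m2 k2 R2" "\<forall>j\<in>{1..k2}. lin_recoverable n Nl2 G2 (R2 j) (\<lambda>x. x i)"
    using C1 C2 i unfolding pir_array_code_iff by meson
  let ?R = "\<lambda>j. if j \<le> k1 then R1 j else (\<lambda>l. l + m1) ` R2 (j - k1)"
  have "lin_recoverable n ?Nl ?G (?R j) (\<lambda>x. x i)" if j: "j \<in> {1..k1 + k2}" for j
  proof (cases "j \<le> k1")
    case True
    with j have "j \<in> {1..k1}" by simp
    then have "R1 j \<subseteq> {1..m1}" "lin_recoverable n Nl1 G1 (R1 j) (\<lambda>x. x i)"
      using R1 is_partition_k_subset by auto
    with True show ?thesis
      by (subst lin_recoverable_cong[where Nl = Nl1 and G = G1]) (auto simp: bucket_append_def)
  next
    case False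
    with j have "j - k1 \<in> {1..k2}" by auto
    then have "R2 (j - k1) \<subseteq> {1..m2}" "lin_recoverable n Nl2 G2 (R2 (j - k1)) (\<lambda>x. x i)"
      using R2 is_partition_k_subset by auto
    with False show ?thesis
      by (simp add: lin_recoverable_shift, subst lin_recoverable_cong[where Nl = Nl2 and G = G2])
        (auto simp: bucket_append_def)
  qed
  then show "\<exists>R. is_partition_k (m1 + m2) (k1 + k2) R \<and>
      (\<forall>j\<in>{1..k1 + k2}. lin_recoverable n ?Nl ?G (R j) (\<lambda>x. x i))"
    using is_partition_k_append[OF R1(1) R2(1)] by blast
qed

section \<open>Blockwise repetition of a code\<close>

lemma block_index:
  fixes n :: nat
  assumes "i \<in> {1..n}"
  shows "(p * n + i - 1) div n = p" "(p * n + i - 1) mod n = i - 1"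
proof -
  have "p * n + i - 1 = i - 1 + p * n" "i - 1 < n"
    using assms by auto
  then show "(p * n + i - 1) div n = p" "(p * n + i - 1) mod n = i - 1"
    by simp_all
qed

lemma sum_within_block:
  fixes g :: "nat \<Rightarrow> nat \<Rightarrow> 'a::comm_monoid_add"
  assumes "p < T"
  shows "(\<Sum>i\<in>{1..T * n}. if (i - 1) div n = p then g ((i - 1) mod n + 1) i else 0)
       = (\<Sum>i\<in>{1..n}. g i (p * n + i))"
proof -
  have block: "{i \<in> {1..T * n}. (i - 1) div n = p} = (\<lambda>i. p * n + i) ` {1..n}"
  proof (intro equalityI subsetI)
    fix i assume i: "i \<in> {i \<in> {1..T * n}. (i - 1) div n = p}"
    then have "n > 0"
      by (cases n) auto
    moreover have "i = p * n + ((i - 1) mod n + 1)"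
      using i div_mult_mod_eq[of "i - 1" n] by auto
    ultimately show "i \<in> (\<lambda>i. p * n + i) ` {1..n}"
      by (intro image_eqI[of _ _ "(i - 1) mod n + 1"]) (auto simp: Suc_le_eq)
  next
    fix i assume "i \<in> (\<lambda>i. p * n + i) ` {1..n}"
    then obtain i0 where i0: "i = p * n + i0" "i0 \<in> {1..n}" by blast
    moreover have "p * n + n \<le> T * n"
      using assms mult_le_mono1[of "Suc p" T n] by simp
    ultimately show "i \<in> {i \<in> {1..T * n}. (i - 1) div n = p}"
      using block_index[OF i0(2), of p] by auto
  qed
  have "(\<Sum>i\<in>{1..T * n}. if (i - 1) div n = p then g ((i - 1) mod n + 1) i else 0)
      = (\<Sum>i\<in>{i \<in> {1..T * n}. (i - 1) div n = p}. g ((i - 1) mod n + 1) i)"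
    by (rule sum.inter_filter[symmetric]) simp
  also have "\<dots> = (\<Sum>i\<in>{1..n}. g ((p * n + i - 1) mod n + 1) (p * n + i))"
    unfolding block by (subst sum.reindex) (auto simp: inj_on_def)
  also have "\<dots> = (\<Sum>i\<in>{1..n}. g i (p * n + i))"
  proof (rule sum.cong)
    show "g ((p * n + i - 1) mod n + 1) (p * n + i) = g i (p * n + i)" if "i \<in> {1..n}" for i
      using that block_index[OF that, of p] by simp
  qed simp
  finally show ?thesis .
qed

text \<open>Coordinate \<open>p * Nl l + r\<close> of bucket \<open>l\<close> is coordinate \<open>r\<close> of bucket \<open>l\<close> of the given code,
  applied to the \<open>p\<close>-th block of \<open>n\<close> data symbols.\<close>

definition block_encoding ::
  "nat \<Rightarrow> (nat \<Rightarrow> nat) \<Rightarrow> (nat \<Rightarrow> nat \<Rightarrow> nat \<Rightarrow> 'a::zero) \<Rightarrow> nat \<Rightarrow> nat \<Rightarrow> nat \<Rightarrow> 'a" where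
  "block_encoding n Nl G l r i =
     (if (r - 1) div Nl l = (i - 1) div n
      then G l ((r - 1) mod Nl l + 1) ((i - 1) mod n + 1) else 0)"

lemma bucket_block_encoding:
  assumes "p < T" "r \<in> {1..Nl l}"
  shows "bucket (T * n) (block_encoding n Nl G) l x (p * Nl l + r)
       = bucket n G l (\<lambda>i. x (p * n + i)) r"
proof -
  have "block_encoding n Nl G l (p * Nl l + r) i
      = (if (i - 1) div n = p then G l r ((i - 1) mod n + 1) else 0)" for i
    using assms(2) block_index[OF assms(2), of p] unfolding block_encoding_def by auto
  then have "bucket (T * n) (block_encoding n Nl G) l x (p * Nl l + r)
      = (\<Sum>i\<in>{1..T * n}. if (i - 1) div n = p then G l r ((i - 1) mod n + 1) * x i else 0)"
    unfolding bucket_def by (intro sum.cong) simp_all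
  also have "\<dots> = bucket n G l (\<lambda>i. x (p * n + i)) r"
    unfolding bucket_def using assms(1) by (rule sum_within_block)
  finally show ?thesis .
qed

lemma lin_recoverable_block:
  assumes "p < T" "lin_recoverable n Nl G S (\<lambda>x. x i)"
  shows "lin_recoverable (T * n) (\<lambda>l. T * Nl l) (block_encoding n Nl G) S (\<lambda>x. x (p * n + i))"
proof -
  obtain c where c: "\<forall>x. x i = (\<Sum>l\<in>S. \<Sum>r\<in>{1..Nl l}. c l r * bucket n G l x r)"
    using assms(2) unfolding lin_recoverable_iff_coefficients by blast
  let ?B = "bucket (T * n) (block_encoding n Nl G)"
  let ?c = "\<lambda>l r. if (r - 1) div Nl l = p then c l ((r - 1) mod Nl l + 1) else 0"
  have "x (p * n + i) = (\<Sum>l\<in>S. \<Sum>r\<in>{1..T * Nl l}. ?c l r * ?B l x r)" for x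
  proof -
    have "x (p * n + i) = (\<Sum>l\<in>S. \<Sum>r\<in>{1..Nl l}. c l r * bucket n G l (\<lambda>i. x (p * n + i)) r)"
      using c[rule_format, of "\<lambda>i. x (p * n + i)"] by simp
    also have "\<dots> = (\<Sum>l\<in>S. \<Sum>r\<in>{1..Nl l}. c l r * ?B l x (p * Nl l + r))"
      using assms(1) by (intro sum.cong refl) (simp add: bucket_block_encoding)
    also have "\<dots> = (\<Sum>l\<in>S. \<Sum>r\<in>{1..T * Nl l}. ?c l r * ?B l x r)"
    proof (rule sum.cong)
      fix l
      have "(\<Sum>r\<in>{1..T * Nl l}. ?c l r * ?B l x r) = (\<Sum>r\<in>{1..T * Nl l}.
          if (r - 1) div Nl l = p then c l ((r - 1) mod Nl l + 1) * ?B l x r else 0)"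
        by (intro sum.cong) simp_all
      also have "\<dots> = (\<Sum>r\<in>{1..Nl l}. c l r * ?B l x (p * Nl l + r))"
        using sum_within_block[OF assms(1), where g = "\<lambda>r0 r. c l r0 * ?B l x r" and n = "Nl l"] by simp
      finally show "(\<Sum>r\<in>{1..Nl l}. c l r * ?B l x (p * Nl l + r))
          = (\<Sum>r\<in>{1..T * Nl l}. ?c l r * ?B l x r)" ..
    qed simp
    finally show ?thesis .
  qed
  then show ?thesis
    unfolding lin_recoverable_iff_coefficients by (intro exI[of _ ?c]) blast
qed

lemma pir_array_code_block_repeat:
  assumes C: "pir_array_code n N k m Nl G" and T: "0 < T"
  shows "pir_array_code (T * n) (T * N) k m (\<lambda>l. T * Nl l) (block_encoding n Nl G)"
  unfolding pir_array_code_iff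
proof (intro conjI ballI)
  show "T * Nl l \<ge> 1" if "l \<in> {1..m}" for l
    using that C T unfolding pir_array_code_iff by auto
  show "(\<Sum>l\<in>{1..m}. T * Nl l) = T * N"
    using C unfolding pir_array_code_iff by (simp flip: sum_distrib_left)
  fix i assume i: "i \<in> {1..T * n}"
  define p where "p = (i - 1) div n"
  define i0 where "i0 = (i - 1) mod n + 1"
  have "n > 0"
    using i by (cases n) auto
  then have "i = p * n + i0" "p < T" "i0 \<in> {1..n}"
    using i div_mult_mod_eq[of "i - 1" n] unfolding p_def i0_def
    by (auto simp: Suc_le_eq less_mult_imp_div_less)
  moreover obtain R where "is_partition_k m k R" "\<forall>j\<in>{1..k}. lin_recoverable n Nl G (R j) (\<lambda>x. x i0)"
    using C \<open>i0 \<in> {1..n}\<close> unfolding pir_array_code_iff by blast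
  ultimately show "\<exists>R. is_partition_k m k R \<and>
      (\<forall>j\<in>{1..k}. lin_recoverable (T * n) (\<lambda>l. T * Nl l) (block_encoding n Nl G) (R j) (\<lambda>x. x i))"
    using lin_recoverable_block by blast
qed

section \<open>Codes built from sums of data symbols\<close>

lemma pir_array_code_empty: "pir_array_code n 0 0 0 Nl G"
  by (simp add: pir_array_code_def is_partition_k_def)

lemma pir_array_code_fibres:
  assumes "\<forall>l\<in>{1..m}. Nl l \<ge> 1" "(\<Sum>l\<in>{1..m}. Nl l) = N"
    and "\<And>i l. i \<in> {1..n} \<Longrightarrow> l \<in> {1..m} \<Longrightarrow> \<gamma> i l \<in> {1..k}"
    and "\<And>i g. i \<in> {1..n} \<Longrightarrow> g \<in> {1..k} \<Longrightarrow>
           lin_recoverable n Nl G {l \<in> {1..m}. \<gamma> i l = g} (\<lambda>x. x i)"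
  shows "pir_array_code n N k m Nl G"
  unfolding pir_array_code_iff
proof (intro conjI ballI exI)
  fix i assume i: "i \<in> {1..n}"
  show "is_partition_k m k (\<lambda>g. {l \<in> {1..m}. \<gamma> i l = g})"
    unfolding is_partition_k_def
    using assms(3)[OF i] lin_recoverable_nonempty[OF assms(4)[OF i]] by blast
  show "lin_recoverable n Nl G {l \<in> {1..m}. \<gamma> i l = g} (\<lambda>x. x i)" if "g \<in> {1..k}" for g
    using assms(4)[OF i that] .
qed (use assms in auto)

definition sum_encoding :: "(nat \<Rightarrow> nat \<Rightarrow> nat set) \<Rightarrow> nat \<Rightarrow> nat \<Rightarrow> nat \<Rightarrow> 'a::{zero,one}" where
  "sum_encoding S l r i = (if i \<in> S l r then 1 else 0)"

lemma bucket_sum_encoding: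
  assumes "S l r \<subseteq> {1..n}"
  shows "bucket n (sum_encoding S) l x r = (\<Sum>i\<in>S l r. x i)"
proof -
  have "bucket n (sum_encoding S) l x r = (\<Sum>i\<in>{1..n}. if i \<in> S l r then x i else 0)"
    unfolding bucket_def sum_encoding_def by (intro sum.cong) simp_all
  also have "\<dots> = (\<Sum>i\<in>{1..n} \<inter> S l r. x i)"
    by (simp add: sum.inter_restrict)
  finally show ?thesis
    using assms by (simp add: Int_absorb1)
qed

definition parity_support :: "nat \<Rightarrow> nat \<Rightarrow> nat \<Rightarrow> nat set" where
  "parity_support a l r = (if l = 1 then {r} else if l = 2 then {a + r} else {r, a + r})"

lemma parity_code:
  assumes "0 < a"
  shows "pir_array_code (2 * a) (3 * a) 2 3 (\<lambda>_. a)
           (sum_encoding (parity_support a) :: nat \<Rightarrow> nat \<Rightarrow> nat \<Rightarrow> 'a::field)"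
proof (rule pir_array_code_fibres[where \<gamma> = "\<lambda>i l. if l = (if i \<le> a then 1 else 2) then 1 else 2"])
  fix i g assume i: "i \<in> {1..2 * a}" and g: "g \<in> {1..2::nat}"
  let ?E = "sum_encoding (parity_support a) :: nat \<Rightarrow> nat \<Rightarrow> nat \<Rightarrow> 'a"
  let ?B = "bucket (2 * a) ?E"
  define c where "c = (if i \<le> a then 1 else 2::nat)"
  define t where "t = (if i \<le> a then i else i - a)"
  define v where "v = (if i \<le> a then a + i else i - a)"
  have t: "t \<in> {1..a}" and v: "v \<in> {1..2 * a}" "v \<noteq> i"
    using i unfolding t_def v_def by auto
  have supports: "parity_support a l t \<subseteq> {1..2 * a}" for l
    using t unfolding parity_support_def by auto
  have direct: "?B c x t = x i" and partner: "?B (3 - c) x t = x v"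
    and parity: "?B 3 x t = x i + x v" for x
    unfolding bucket_sum_encoding[where S = "parity_support a", OF supports]
    using i t v by (auto simp: c_def t_def v_def parity_support_def insert_commute)
  show "lin_recoverable (2 * a) (\<lambda>_. a) ?E
      {l \<in> {1..3}. (if l = (if i \<le> a then 1 else 2) then 1 else 2) = g} (\<lambda>x. x i)"
  proof (cases "g = 1")
    case True
    then show ?thesis
      by (intro lin_recoverable_coordinate[where Nl = "\<lambda>_. a", OF _ _ t direct]) (auto simp: c_def)
  next
    case False
    with g show ?thesis
      by (intro lin_recoverable_coordinate_diff[where Nl = "\<lambda>_. a", OF _ _ t _ t parity partner])
        (auto simp: c_def)
  qed
qed (use assms in auto)

lemma parity_code_copies:
  assumes "0 < a"
  shows "\<exists>Nl (G :: nat \<Rightarrow> nat \<Rightarrow> nat \<Rightarrow> 'a::field).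
           pir_array_code (2 * a) (3 * a * b) (2 * b) (3 * b) Nl G"
proof (induction b)
  case 0
  have "pir_array_code (2 * a) 0 0 0 (\<lambda>_. 0) (\<lambda>_ _ _. 0 :: 'a)"
    by (rule pir_array_code_empty)
  then show ?case
    by auto
next
  case (Suc b)
  then obtain Nl and G :: "nat \<Rightarrow> nat \<Rightarrow> nat \<Rightarrow> 'a"
    where "pir_array_code (2 * a) (3 * a * b) (2 * b) (3 * b) Nl G"
    by blast
  from pir_array_code_append[OF this parity_code[OF assms]] show ?case
    by (auto simp: algebra_simps)
qed

section \<open>The cyclic code\<close>

definition residue_index :: "nat \<Rightarrow> int \<Rightarrow> nat" where
  "residue_index M z = nat (z mod int M) + 1"

lemma residue_index_range: "0 < M \<Longrightarrow> residue_index M z \<in> {1..M}"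
  using pos_mod_bound[of "int M" z] unfolding residue_index_def by (simp add: Suc_le_eq nat_less_iff)

lemma int_residue_index: "0 < M \<Longrightarrow> int (residue_index M z) = z mod int M + 1"
  unfolding residue_index_def by simp

lemma residue_index_of_index: "l \<in> {1..M} \<Longrightarrow> residue_index M (int l - 1) = l"
  unfolding residue_index_def by (cases l) auto

lemma residue_index_mod_eq: "z mod int M = w mod int M \<Longrightarrow> residue_index M z = residue_index M w"
  unfolding residue_index_def by simp

lemma residue_index_shift_ne:
  assumes "odd a" "0 < e" "e < int a"
  shows "residue_index (2 * a) z \<noteq> residue_index (2 * a) (z + 4 * e)"
proof
  assume "residue_index (2 * a) z = residue_index (2 * a) (z + 4 * e)"
  then have "z mod (2 * int a) = (z + 4 * e) mod (2 * int a)"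
    using assms(1) int_residue_index[of "2 * a" z] int_residue_index[of "2 * a" "z + 4 * e"]
    by (simp add: odd_pos)
  then have "2 * int a dvd 2 * (2 * e)"
    using mod_eq_dvd_iff[of "z + 4 * e" "2 * int a" z] by simp
  then have "int a dvd 2 * e"
    using dvd_times_left_cancel_iff[of "2 :: int" "int a" "2 * e"] by simp
  moreover have "coprime (int a) 2"
    using assms(1) by (simp add: odd_even_add)
  ultimately have "int a dvd e"
    using coprime_dvd_mult_right_iff by blast
  with assms(2,3) show False
    using zdvd_imp_le by fastforce
qed

text \<open>A bucket at offset \<open>2e + 1\<close> or \<open>4e\<close> (mod \<open>2a\<close>) from a symbol lies in its recovery group
  \<open>e + 1\<close>; \<open>(a + 1)/2\<close> is the inverse of \<open>2\<close> modulo \<open>a\<close>.\<close>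

definition offset_group :: "nat \<Rightarrow> int \<Rightarrow> nat" where
  "offset_group a d =
     nat (if odd d then d div 2 else (d div 2 * ((int a + 1) div 2)) mod int a) + 1"

lemma offset_group_range:
  assumes "0 < a" "0 \<le> d" "d < 2 * int a"
  shows "offset_group a d \<in> {1..a}"
  using assms unfolding offset_group_def by (auto simp: Suc_le_eq nat_less_iff)

lemma offset_group_odd:
  assumes "0 \<le> e" "e < int a"
  shows "offset_group a (2 * e + 1) = nat e + 1"
  unfolding offset_group_def by simp

lemma offset_group_even:
  assumes "odd a" "0 \<le> e" "e < int a"
  shows "offset_group a (4 * e mod (2 * int a)) = nat e + 1"
proof -
  have "4 * e mod (2 * int a) = 2 * (2 * e mod int a)"
    using mult_mod_right[of 2 "2 * e" "int a"] by simp
  moreover have "(2 * e mod int a) * ((int a + 1) div 2) mod int a = e"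
  proof -
    have "2 * ((int a + 1) div 2) = int a + 1"
      using even_two_times_div_two[of "int a + 1"] assms(1) by simp
    then have "(2 * e mod int a) * ((int a + 1) div 2) mod int a = (e * (int a + 1)) mod int a"
      by (metis mod_mult_left_eq mult.assoc mult.commute)
    also have "\<dots> = e"
      using assms(2,3) by (simp add: algebra_simps)
    finally show ?thesis .
  qed
  ultimately show ?thesis
    unfolding offset_group_def by simp
qed

definition cyclic_group :: "nat \<Rightarrow> nat \<Rightarrow> nat \<Rightarrow> nat" where
  "cyclic_group a i l = offset_group a ((int l - int i) mod (2 * int a))"

lemma cyclic_group_residue_index:
  assumes "0 < a"
  shows "cyclic_group a i (residue_index (2 * a) (int i - 1 + d)) = offset_group a (d mod (2 * int a))"
proof -
  have "(int (residue_index (2 * a) (int i - 1 + d)) - int i) mod (2 * int a)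
      = ((int i - 1 + d) mod (2 * int a) + 1 - int i) mod (2 * int a)"
    using assms by (simp add: int_residue_index)
  also have "\<dots> = (int i - 1 + d + 1 - int i) mod (2 * int a)"
    by (metis mod_add_left_eq mod_diff_left_eq)
  also have "\<dots> = d mod (2 * int a)"
    by simp
  finally show ?thesis
    unfolding cyclic_group_def by simp
qed

text \<open>Index \<open>l \<in> {1..2a}\<close> stands for the residue \<open>l - 1\<close> modulo \<open>2a\<close>; coordinate \<open>e + 1\<close> of
  bucket \<open>u\<close> holds \<open>x\<^sub>u\<close> for \<open>e = 0\<close> and \<open>x\<^bsub>u-1-2e\<^esub> + x\<^bsub>u-1+2e\<^esub>\<close> otherwise.\<close>

definition cyclic_support :: "nat \<Rightarrow> nat \<Rightarrow> nat \<Rightarrow> nat set" where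
  "cyclic_support a l r =
     (if r = 1 then {l}
      else {residue_index (2 * a) (int l - 2 - 2 * (int r - 1)),
            residue_index (2 * a) (int l - 2 + 2 * (int r - 1))})"

lemma cyclic_support_pair:
  assumes "0 < e" "e < int a" "s = min e (int a - e)"
  shows "cyclic_support a (residue_index (2 * a) (z + 2 * e + 1)) (nat s + 1)
       = {residue_index (2 * a) z, residue_index (2 * a) (z + 4 * e)}"
proof -
  let ?l = "residue_index (2 * a) (z + 2 * e + 1)"
  have shift: "residue_index (2 * a) (int ?l - 2 + w) = residue_index (2 * a) (z + 2 * e + w)" for w
  proof (rule residue_index_mod_eq)
    have "(int ?l - 2 + w) mod (2 * int a) = ((z + 2 * e + 1) mod (2 * int a) - 1 + w) mod (2 * int a)"
      using assms(1,2) by (simp add: int_residue_index)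
    also have "\<dots> = (z + 2 * e + 1 - 1 + w) mod (2 * int a)"
      by (metis mod_add_left_eq mod_diff_left_eq)
    finally show "(int ?l - 2 + w) mod int (2 * a) = (z + 2 * e + w) mod int (2 * a)"
      by simp
  qed
  have "s = e \<or> s = int a - e"
    using assms(3) by auto
  then have "{residue_index (2 * a) (z + 2 * e - 2 * s), residue_index (2 * a) (z + 2 * e + 2 * s)}
      = {residue_index (2 * a) z, residue_index (2 * a) (z + 4 * e)}"
  proof
    assume "s = int a - e"
    moreover have "residue_index (2 * a) (z + 2 * e - 2 * (int a - e)) = residue_index (2 * a) (z + 4 * e)"
      "residue_index (2 * a) (z + 2 * e + 2 * (int a - e)) = residue_index (2 * a) z"
      by (intro residue_index_mod_eq; simp add: algebra_simps)+
    ultimately show ?thesis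
      by auto
  qed (simp add: algebra_simps insert_commute)
  moreover have "nat s + 1 \<noteq> 1" "int (nat s + 1) - 1 = s"
    using assms by auto
  ultimately show ?thesis
    unfolding cyclic_support_def using shift[of "- 2 * s"] shift[of "2 * s"] by (simp add: algebra_simps)
qed

lemma cyclic_support_subset:
  assumes "0 < a" "l \<in> {1..2 * a}"
  shows "cyclic_support a l r \<subseteq> {1..2 * a}"
  using assms residue_index_range[of "2 * a"] unfolding cyclic_support_def by auto

lemma cyclic_recovery:
  assumes a: "a = 2 * h + 1" and i: "i \<in> {1..2 * a}" and g: "g \<in> {1..a}"
  shows "lin_recoverable (2 * a) (\<lambda>_. h + 1)
           (sum_encoding (cyclic_support a) :: nat \<Rightarrow> nat \<Rightarrow> nat \<Rightarrow> 'a::field)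
           {l \<in> {1..2 * a}. cyclic_group a i l = g} (\<lambda>x. x i)"
proof -
  let ?E = "sum_encoding (cyclic_support a) :: nat \<Rightarrow> nat \<Rightarrow> nat \<Rightarrow> 'a"
  let ?S = "{l \<in> {1..2 * a}. cyclic_group a i l = g}"
  let ?r = "residue_index (2 * a)"
  have a0: "0 < a" and odd_a: "odd a"
    using a by auto
  have bucket_E: "bucket (2 * a) ?E l x r = (\<Sum>j\<in>cyclic_support a l r. x j)"
    if "l \<in> {1..2 * a}" for l r x
    using bucket_sum_encoding[where S = "cyclic_support a", OF cyclic_support_subset[OF a0 that]] .
  have in_fibre: "?r (int i - 1 + d) \<in> ?S" if "offset_group a (d mod (2 * int a)) = g" for d
    using that residue_index_range[of "2 * a"] cyclic_group_residue_index[OF a0] a0 by simp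
  have i_index: "?r (int i - 1) = i"
    using i by (rule residue_index_of_index)
  define e where "e = int g - 1"
  have e: "0 \<le> e" "e < int a" "g = nat e + 1"
    using g unfolding e_def by auto
  show ?thesis
  proof (cases "e = 0")
    case True
    have "i \<in> ?S"
      using in_fibre[of 0] i_index e True unfolding offset_group_def by simp
    moreover have "bucket (2 * a) ?E i x 1 = x i" for x
      using bucket_E[OF i] unfolding cyclic_support_def by simp
    ultimately show ?thesis
      by (intro lin_recoverable_coordinate[where Nl = "\<lambda>_. h + 1" and r = 1]) auto
  next
    case False
    define s where "s = min e (int a - e)"
    define l1 where "l1 = ?r (int i - 1 + 2 * e + 1)"
    define l2 where "l2 = ?r (int i - 1 + 4 * e)"
    have l1: "l1 \<in> ?S"
      using in_fibre[of "2 * e + 1"] offset_group_odd[OF e(1,2)] e unfolding l1_def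
      by (simp add: add.assoc)
    have l2: "l2 \<in> ?S"
      using in_fibre[of "4 * e"] offset_group_even[OF odd_a e(1,2)] e unfolding l2_def by simp
    have s: "nat s + 1 \<in> {1..h + 1}"
      using a e unfolding s_def by auto
    have sum: "bucket (2 * a) ?E l1 x (nat s + 1) = x i + x l2" for x
    proof -
      have "cyclic_support a l1 (nat s + 1) = {i, l2}"
        using cyclic_support_pair[of e a s "int i - 1"] e False i_index
        unfolding s_def l1_def l2_def by simp
      moreover have "i \<noteq> l2"
        using residue_index_shift_ne[OF odd_a _ e(2), of "int i - 1"] e False i_index
        unfolding l2_def by simp
      ultimately show ?thesis
        using bucket_E l1 by simp
    qed
    have partner: "bucket (2 * a) ?E l2 x 1 = x l2" for x
      using bucket_E l2 unfolding cyclic_support_def by simp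
    show ?thesis
      by (rule lin_recoverable_coordinate_diff[where Nl = "\<lambda>_. h + 1", OF _ l1 s l2 _ sum partner])
        auto
  qed
qed

lemma cyclic_code:
  assumes a: "a = 2 * h + 1"
  shows "pir_array_code (2 * a) (a * (a + 1)) a (2 * a) (\<lambda>_. h + 1)
           (sum_encoding (cyclic_support a) :: nat \<Rightarrow> nat \<Rightarrow> nat \<Rightarrow> 'a::field)"
proof (rule pir_array_code_fibres[where \<gamma> = "cyclic_group a"])
  show "(\<Sum>l\<in>{1..2 * a}. h + 1) = a * (a + 1)"
    using a by simp
  show "cyclic_group a i l \<in> {1..a}" for i l
    unfolding cyclic_group_def using a by (intro offset_group_range) auto
qed (use a cyclic_recovery in auto)

section \<open>The bound\<close>

lemma cyclic_parity_code:
  assumes "a = 2 * h + 1" "0 < T"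
  shows "\<exists>Nl (G :: nat \<Rightarrow> nat \<Rightarrow> nat \<Rightarrow> 'a::field).
           pir_array_code (T * (2 * a)) (T * (a * (a + 1) + 3 * a * b)) (a + 2 * b) (2 * a + 3 * b) Nl G"
proof -
  have "0 < a"
    using assms(1) by simp
  then obtain Nl and G :: "nat \<Rightarrow> nat \<Rightarrow> nat \<Rightarrow> 'a"
    where "pir_array_code (2 * a) (3 * a * b) (2 * b) (3 * b) Nl G"
    using parity_code_copies by blast
  from pir_array_code_block_repeat[OF pir_array_code_append[OF cyclic_code[OF assms(1)] this] assms(2)]
  show ?thesis
    by blast
qed

lemma N_P_le:
  assumes "pir_array_code n N k m Nl (G :: nat \<Rightarrow> nat \<Rightarrow> nat \<Rightarrow> 'a::{field,finite})"
  shows "N_P TYPE('a) n k m \<le> N"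
  unfolding N_P_def using assms by (intro cInf_lower) auto

lemma cyclic_parity_parametersE:
  fixes n k m :: nat
  assumes "n > 0" "3 * k < 2 * m" "m < 2 * k" "odd (2 * int m - 3 * int k)"
    and "lcm (4 * int m - 6 * int k) (4 * int k - 2 * int m) dvd int n"
  obtains a b h T
    where "k = a + 2 * b" "m = 2 * a + 3 * b" "a = 2 * h + 1" "n = T * (2 * a)" "0 < T"
proof -
  define a where "a = 2 * m - 3 * k"
  define b where "b = 2 * k - m"
  have k: "k = a + 2 * b" and m: "m = 2 * a + 3 * b" and a: "int a = 2 * int m - 3 * int k"
    using assms(2,3) unfolding a_def b_def by auto
  have "odd (int a)"
    unfolding a by (fact assms(4))
  then obtain h where h: "a = 2 * h + 1"
    using oddE by fastforce
  have "int (2 * a) dvd int n"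
    using dvd_trans[OF dvd_lcm1 assms(5)] a by simp
  then obtain T where "n = 2 * a * T"
    unfolding of_nat_dvd_iff by (rule dvdE)
  then have n: "n = T * (2 * a)"
    by simp
  with assms(1) have "0 < T"
    by simp
  with k m h n show ?thesis
    using that by blast
qed

theorem corollary4p10:
  fixes n k m :: nat
  assumes "n > 0" "k > 0" "m > 0"
    and "3 * k < 2 * m" and "m < 2 * k"
    and "odd (2 * int m - 3 * int k)"
    and "lcm (4 * int m - 6 * int k) (4 * int k - 2 * int m) dvd int n"
  shows "real (N_P TYPE('a::{field,finite}) n k m)
           \<le> (3 * real k - real m + 1) / 2 * real n"
proof -
  obtain a b h T where k: "k = a + 2 * b" and m: "m = 2 * a + 3 * b"
    and h: "a = 2 * h + 1" and n: "n = T * (2 * a)" and T: "0 < T"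
    using cyclic_parity_parametersE[OF assms(1,4-7)] .
  define N where "N = T * (a * (a + 1) + 3 * a * b)"
  obtain Nl and G :: "nat \<Rightarrow> nat \<Rightarrow> nat \<Rightarrow> 'a" where "pir_array_code n N k m Nl G"
    using cyclic_parity_code[OF h T] n k m unfolding N_def by blast
  then have "real (N_P TYPE('a) n k m) \<le> real N"
    using N_P_le of_nat_le_iff by blast
  also have "\<dots> = (3 * real k - real m + 1) / 2 * real n"
  proof -
    have "real (2 * N + m * n) = real ((3 * k + 1) * n)"
      unfolding N_def n k m by (simp add: algebra_simps)
    then show ?thesis
      by (simp add: field_simps)
  qed
  finally show ?thesis .
qed

end
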